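(* Let $\mathbf c=(c_0,\dots,c_m)$ and $\mathbf d=(d_0,\dots,d_n)$ be degree sequences, and let $A=\Delta(\mathbf c)$, $B=\Delta(\mathbf d)$. Then \[\pi(\mathbf c)\cdot\pi(\mathbf d)=\sum_{\sigma\in\mathrm{Sh}(A,B)}\pi\big(\Sigma(\sigma,c_0+d_0)\big).\] More generally, for degree sequences $\mathbf d^1,\dots,\mathbf d^r$ with $\mathbf d^i=(d^i_0,\dots)$ and $A_i=\Delta(\mathbf d^i)$, \[\prod_{i=1}^r\pi(\mathbf d^i)=\sum_{\sigma\in\mathrm{Sh}(A_1,\dots,A_r)}\pi\big(\Sigma(\sigma,d^1_0+\cdots+d^r_0)\big).\]
   Context: A diagram is a finitely supported function $\mathbb Z_{\ge0}\times\mathbb Z\to\mathbb Q$, $(i,j)\mapsto\beta_{i,j}$. The (tensor) product of diagrams is $(\beta\cdot\beta')_{i,j}=\sum_{i_1+i_2=i,\ j_1+j_2=j}\beta_{i_1,j_1}\beta'_{i_2,j_2}$. A degree sequence is $\mathbf d=(d_0,\dots,d_c)\in\mathbb Z^{c+1}$ with $d_0<\cdots<d_c$. The pure diagram $\pi(\mathbf d)$ has entries $\pi(\mathbf d)_{i,j}=\prod_{k\ne i}\frac1{|d_i-d_k|}$ if $0\le i\le c$ and $j=d_i$, and $0$ otherwise. The first difference is $\Delta(\mathbf d)=(d_1-d_0,d_2-d_1,\dots,d_c-d_{c-1})$. For a sequence $s=(s_1,\dots,s_p)$ and an integer $e$, $\Sigma(s,e)=(e,e+s_1,e+s_1+s_2,\dots,e+s_1+\cdots+s_p)$.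 For finite sequences $A_1,\dots,A_r$, $\mathrm{Sh}(A_1,\dots,A_r)$ is the set of shuffles: sequences obtained by interleaving the entries of $A_1,\dots,A_r$ so that the relative order of the entries of each $A_i$ is preserved (shuffles are distinguished by which positions are occupied by entries of which $A_i$, so they are counted with multiplicity even if entries coincide). *)

theory Defs
  imports Main "HOL.Rat"
begin

text \<open>A diagram is a function nat => int => rat (meant to be finitely supported).\<close>
type_synonym diagram = "nat \<Rightarrow> int \<Rightarrow> rat"

definition dsupp :: "diagram \<Rightarrow> (nat \<times> int) set" where
  "dsupp b = {p. b (fst p) (snd p) \<noteq> 0}"

definition dprod :: "diagram \<Rightarrow> diagram \<Rightarrow> diagram" where
  "dprod b b' i j = (\<Sum>(p, q) \<in> {(p, q). p \<in> dsupp b \<and> q \<in> dsupp b' \<and>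
       fst p + fst q = i \<and> snd p + snd q = j}.
       b (fst p) (snd p) * b' (fst q) (snd q))"

definition dunit :: diagram where
  "dunit i j = (if i = 0 \<and> j = 0 then 1 else 0)"

definition dprod_list :: "diagram list \<Rightarrow> diagram" where
  "dprod_list bs = foldr dprod bs dunit"

definition degree_seq :: "int list \<Rightarrow> bool" where
  "degree_seq d \<longleftrightarrow> d \<noteq> [] \<and> sorted_wrt (<) d"

definition pure :: "int list \<Rightarrow> diagram" where
  "pure d i j = (if i < length d \<and> j = d ! i
      then (\<Prod>k \<in> {0..<length d} - {i}. 1 / of_int \<bar>d ! i - d ! k\<bar>) else 0)"

definition Delta :: "int list \<Rightarrow> int list" where
  "Delta d = map (\<lambda>k. d ! (k + 1) - d ! k) [0..<length d - 1]"

definition Sigma_seq :: "int list \<Rightarrow> int \<Rightarrow> int list" where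
  "Sigma_seq s e = map (\<lambda>k. e + sum_list (take k s)) [0..<length s + 1]"

text \<open>Shuffles of A_1,...,A_r are encoded by words w over {0..<r} in which letter i occurs
  exactly length A_i times (w records which list each position is taken from);
  this counts shuffles with multiplicity as required.\<close>
definition shuffle_words :: "'a list list \<Rightarrow> nat list set" where
  "shuffle_words As = {w. set w \<subseteq> {..<length As} \<and>
      (\<forall>i < length As. count_list w i = length (As ! i))}"

fun interleave :: "nat list \<Rightarrow> 'a list list \<Rightarrow> 'a list" where
  "interleave [] As = []"
| "interleave (i # w) As = hd (As ! i) # interleave w (As[i := tl (As ! i)])"

end

theory Submission
  imports Defs
begin

text \<open>Entry \<open>(i, j)\<close> of the product of the pure
  diagrams of \<open>d\<^sub>1, \<dots>, d\<^sub>r\<close> is a sum, over index tuples \<open>(a\<^sub>t)\<close> with \<open>\<Sum> a\<^sub>t = i\<close>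
  and \<open>\<Sum> d\<^sub>t ! a\<^sub>t = j\<close>, of products of the nonzero entries of the factors. For a shuffle
  word \<open>w\<close>, the shuffled degree sequence is \<open>k \<mapsto> \<Sum> d\<^sub>t ! c\<^sub>t k\<close>, where \<open>c\<^sub>t k\<close> counts the
  letters \<open>t\<close> among the first \<open>k\<close> letters of \<open>w\<close>; so its pure diagram contributes to entry
  \<open>(i, j)\<close> exactly when the prefix counts \<open>(c\<^sub>t i)\<close> form such an index tuple.

  Grouping the words by these prefix counts \<open>a\<close>, every word splits as \<open>u @ v\<close> with \<open>u\<close> of
  letter counts \<open>a\<close>, and its coefficient at position \<open>i\<close> factors into a weight of \<open>rev u\<close>
  times a weight of \<open>v\<close>. Summed over all words with given letter counts, such weights
  satisfy a partial fraction identity (proved by classifying words by their last letter),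
  and the two resulting products are the halves of the coefficients of the \<open>d\<^sub>t\<close> at \<open>a\<^sub>t\<close>,
  split at position \<open>a\<^sub>t\<close>.\<close>

definition words_with_counts :: "nat \<Rightarrow> (nat \<Rightarrow> nat) \<Rightarrow> nat list set" where
  "words_with_counts r c = {w. set w \<subseteq> {..<r} \<and> (\<forall>t<r. count_list w t = c t)}"

lemma length_words_with_counts:
  "w \<in> words_with_counts r c \<Longrightarrow> length w = (\<Sum>t<r. c t)"
  by (auto simp: words_with_counts_def simp flip: sum_count_set[of w "{..<r}"])

lemma finite_words_with_counts: "finite (words_with_counts r c)"
proof (rule finite_subset)
  show "words_with_counts r c \<subseteq> {w. set w \<subseteq> {..<r} \<and> length w = (\<Sum>t<r. c t)}"
    using length_words_with_counts by (auto simp: words_with_counts_def)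
qed (simp add: finite_lists_length_eq)

lemma words_with_counts_zero:
  "\<forall>t<r. c t = 0 \<Longrightarrow> words_with_counts r c = {[]}"
  using length_words_with_counts[of _ r c] by (auto simp: words_with_counts_def)

lemma words_with_counts_snoc:
  assumes "t < r" and "0 < c t"
  shows "{w \<in> words_with_counts r c. last w = t} =
    (\<lambda>w. w @ [t]) ` words_with_counts r (c(t := c t - 1))"
proof (intro equalityI subsetI)
  fix w assume w: "w \<in> {w \<in> words_with_counts r c. last w = t}"
  then have "w \<noteq> []" using assms by (auto simp: words_with_counts_def)
  then have w_eq: "w = butlast w @ [t]" using w append_butlast_last_id[of w] by simp
  have "count_list (butlast w) s = (c(t := c t - 1)) s" if "s < r" for s
    using w that arg_cong[OF w_eq, of "\<lambda>w. count_list w s"]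
    by (auto simp: words_with_counts_def)
  then have "butlast w \<in> words_with_counts r (c(t := c t - 1))"
    using w by (auto simp: words_with_counts_def dest: in_set_butlastD)
  then show "w \<in> (\<lambda>w. w @ [t]) ` words_with_counts r (c(t := c t - 1))"
    using w_eq by blast
qed (use assms in \<open>auto simp: words_with_counts_def\<close>)

lemma rev_words_with_counts: "w \<in> words_with_counts r c \<Longrightarrow> rev w \<in> words_with_counts r c"
  by (simp add: words_with_counts_def)

lemma sum_update_decrement:
  fixes c :: "nat \<Rightarrow> nat"
  assumes "t < r" and "0 < c t"
  shows "(\<Sum>s<r. c s) = Suc (\<Sum>s<r. (c(t := c t - 1)) s)"
proof -
  have "(\<Sum>s<r. c s) = (\<Sum>s<r. (c(t := c t - 1)) s + (if s = t then 1 else 0))"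
    using assms(2) by (intro sum.cong) auto
  also have "\<dots> = (\<Sum>s<r. (c(t := c t - 1)) s) + 1"
    using assms(1) by (simp only: sum.distrib) simp
  finally show ?thesis by simp
qed

lemma prod_update_decrement:
  fixes c :: "nat \<Rightarrow> nat" and f :: "nat \<Rightarrow> nat \<Rightarrow> 'a::comm_monoid_mult"
  assumes "t < r" and "0 < c t"
  shows "(\<Prod>s<r. \<Prod>k\<in>{1..c s}. f s k) =
    (\<Prod>s<r. \<Prod>k\<in>{1..(c(t := c t - 1)) s}. f s k) * f t (c t)"
proof -
  have "(\<Prod>k\<in>{1..c t}. f t k) = (\<Prod>k\<in>{1..c t - 1}. f t k) * f t (c t)"
    using assms(2) prod.cl_ivl_Suc[of "f t" 1 "c t - 1"] by simp
  moreover have "(\<Prod>s<r. \<Prod>k\<in>{1..c s}. f s k) =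
      (\<Prod>k\<in>{1..c t}. f t k) * (\<Prod>s\<in>{..<r} - {t}. \<Prod>k\<in>{1..c s}. f s k)"
    using assms(1) by (simp add: prod.remove)
  moreover have "(\<Prod>s<r. \<Prod>k\<in>{1..(c(t := c t - 1)) s}. f s k) =
      (\<Prod>k\<in>{1..c t - 1}. f t k) * (\<Prod>s\<in>{..<r} - {t}. \<Prod>k\<in>{1..c s}. f s k)"
    using assms(1) by (simp add: prod.remove)
  ultimately show ?thesis by (simp add: ac_simps)
qed

lemma words_with_counts_append_split:
  assumes "\<forall>t<r. a t \<le> c t"
  shows "bij_betw (\<lambda>(u, v). u @ v) (words_with_counts r a \<times> words_with_counts r (\<lambda>t. c t - a t))
    {w \<in> words_with_counts r c. \<forall>t<r. count_list (take (\<Sum>t<r. a t) w) t = a t}"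
    (is "bij_betw _ (?U \<times> ?V) ?W")
proof (rule bij_betw_byWitness[where f' = "\<lambda>w. (take (\<Sum>t<r. a t) w, drop (\<Sum>t<r. a t) w)"])
  have count_split: "count_list w t = count_list (take n w) t + count_list (drop n w) t"
    for w :: "nat list" and n t
    by (metis append_take_drop_id count_list_append)
  show "\<forall>p\<in>?U \<times> ?V. (\<lambda>w. (take (\<Sum>t<r. a t) w, drop (\<Sum>t<r. a t) w)) ((\<lambda>(u, v). u @ v) p) = p"
    using length_words_with_counts by fastforce
  have "u @ v \<in> ?W" if u: "u \<in> ?U" and v: "v \<in> ?V" for u v
    using assms length_words_with_counts[OF u] u v by (auto simp: words_with_counts_def)
  then show "(\<lambda>(u, v). u @ v) ` (?U \<times> ?V) \<subseteq> ?W" by auto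
  have "take (\<Sum>t<r. a t) w \<in> ?U \<and> drop (\<Sum>t<r. a t) w \<in> ?V" if w: "w \<in> ?W" for w
  proof -
    have "count_list (drop (\<Sum>t<r. a t) w) t = c t - a t" if "t < r" for t
      using w that count_split[of w t "\<Sum>t<r. a t"] by (simp add: words_with_counts_def)
    then show ?thesis
      using w by (auto simp: words_with_counts_def dest: in_set_takeD in_set_dropD)
  qed
  then show "(\<lambda>w. (take (\<Sum>t<r. a t) w, drop (\<Sum>t<r. a t) w)) ` ?W \<subseteq> ?U \<times> ?V" by auto
qed simp

definition word_weight :: "nat \<Rightarrow> (nat \<Rightarrow> nat \<Rightarrow> 'a::field) \<Rightarrow> nat list \<Rightarrow> 'a" where
  "word_weight r g w = (\<Prod>k\<in>{1..length w}. 1 / (\<Sum>t<r. g t (count_list (take k w) t)))"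

lemma word_weight_snoc:
  "word_weight r g (w @ [t]) = word_weight r g w / (\<Sum>s<r. g s (count_list (w @ [t]) s))"
  unfolding word_weight_def by simp

lemma sum_word_weight_words_with_counts:
  fixes g :: "nat \<Rightarrow> nat \<Rightarrow> 'a::linordered_field"
  assumes "\<forall>t<r. g t 0 = 0" and "\<forall>t<r. \<forall>k\<in>{1..c t}. 0 < g t k"
  shows "(\<Sum>w\<in>words_with_counts r c. word_weight r g w) = (\<Prod>t<r. \<Prod>k\<in>{1..c t}. 1 / g t k)"
  using assms(2)
proof (induction "\<Sum>t<r. c t" arbitrary: c)
  case 0
  then show ?case by (simp add: words_with_counts_zero word_weight_def)
next
  case (Suc n)
  define P where "P c' = (\<Prod>t<r. \<Prod>k\<in>{1..c' t}. 1 / g t k)" for c'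
  define G where "G = (\<Sum>t<r. g t (c t))"
  have last_in: "last w \<in> set w \<inter> {..<r}" if "w \<in> words_with_counts r c" for w
  proof -
    have "w \<noteq> []" using length_words_with_counts[OF that] Suc.hyps(2) by auto
    then show ?thesis using that by (auto simp: words_with_counts_def intro: last_in_set)
  qed
  have last_fibre: "(\<Sum>w\<in>{w \<in> words_with_counts r c. last w = t}. word_weight r g w)
      = P c * g t (c t) / G" if t: "t < r" for t
  proof (cases "c t = 0")
    case True
    have no_words: "{w \<in> words_with_counts r c. last w = t} = {}"
      using last_in True t by (fastforce simp: words_with_counts_def count_list_0_iff)
    show ?thesis unfolding no_words using True assms(1) t by simp
  next
    case False
    let ?c' = "c(t := c t - 1)"
    have g_nonzero: "g t (c t) \<noteq> 0" using Suc.prems[rule_format, of t "c t"] t False by simp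
    have "(\<Sum>w\<in>{w \<in> words_with_counts r c. last w = t}. word_weight r g w)
        = (\<Sum>w\<in>words_with_counts r ?c'. word_weight r g (w @ [t]))"
      using False t by (simp add: words_with_counts_snoc sum.reindex inj_on_def)
    also have "\<dots> = (\<Sum>w\<in>words_with_counts r ?c'. word_weight r g w) / G"
      unfolding sum_divide_distrib G_def word_weight_snoc
      by (intro sum.cong refl arg_cong2[where f = "(/)"] sum.cong)
        (use False in \<open>auto simp: words_with_counts_def\<close>)
    also have "\<dots> = P ?c' / G"
    proof -
      have "n = (\<Sum>s<r. ?c' s)"
        using sum_update_decrement[OF t, of c] Suc.hyps(2) False by simp
      moreover have "\<forall>s<r. \<forall>k\<in>{1..?c' s}. 0 < g s k"
        using Suc.prems by auto
      ultimately show ?thesis using Suc.hyps(1) by (simp add: P_def)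
    qed
    also have "\<dots> = P c * g t (c t) / G"
      using g_nonzero prod_update_decrement[OF t, of c "\<lambda>s k. 1 / g s k"] False
      by (simp add: P_def)
    finally show ?thesis .
  qed
  obtain t0 where t0: "t0 < r" "0 < c t0"
    using Suc.hyps(2) by (metis lessThan_iff neq0_conv sum.neutral Zero_not_Suc)
  have "0 < G" unfolding G_def
  proof (rule sum_pos2[of "{..<r}" t0])
    show "0 < g t0 (c t0)" using Suc.prems t0 by simp
    show "0 \<le> g t (c t)" if "t \<in> {..<r}" for t
      using that Suc.prems assms(1) by (cases "c t") (auto intro: less_imp_le)
  qed (use t0 in auto)
  have "(\<Sum>w\<in>words_with_counts r c. word_weight r g w)
      = (\<Sum>t<r. \<Sum>w\<in>{w \<in> words_with_counts r c. last w = t}. word_weight r g w)"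
    by (rule sum.group[symmetric]) (use last_in finite_words_with_counts in auto)
  also have "\<dots> = P c * G / G"
    by (simp add: last_fibre G_def sum_distrib_left flip: sum_divide_distrib)
  finally show ?case using \<open>0 < G\<close> by (simp add: P_def)
qed

definition pure_coeff :: "int list \<Rightarrow> nat \<Rightarrow> rat" where
  "pure_coeff d i = (\<Prod>k\<in>{0..<length d} - {i}. 1 / of_int \<bar>d ! i - d ! k\<bar>)"

lemma pure_eq_pure_coeff: "pure d i j = (if i < length d \<and> j = d ! i then pure_coeff d i else 0)"
  by (simp add: pure_def pure_coeff_def)

lemma pure_coeff_split:
  assumes d: "sorted_wrt (<) d" and i: "i < length d"
  shows "pure_coeff d i = (\<Prod>m\<in>{1..i}. 1 / of_int (d ! i - d ! (i - m)))
    * (\<Prod>m\<in>{1..length d - 1 - i}. 1 / of_int (d ! (i + m) - d ! i))"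
proof -
  let ?below = "(\<lambda>m. i - m) ` {1..i}" and ?above = "(\<lambda>m. i + m) ` {1..length d - 1 - i}"
  have indices: "{0..<length d} - {i} = ?below \<union> ?above"
  proof (intro equalityI subsetI)
    fix k assume k: "k \<in> {0..<length d} - {i}"
    show "k \<in> ?below \<union> ?above"
    proof (cases "k < i")
      case True
      then have "k = i - (i - k)" "i - k \<in> {1..i}" by auto
      then show ?thesis by blast
    next
      case False
      then have "k = i + (k - i)" "k - i \<in> {1..length d - 1 - i}" using k by auto
      then show ?thesis by blast
    qed
  qed (use i in auto)
  have "pure_coeff d i = (\<Prod>k\<in>?below. 1 / of_int \<bar>d ! i - d ! k\<bar>)
      * (\<Prod>k\<in>?above. 1 / of_int \<bar>d ! i - d ! k\<bar>)"
    unfolding pure_coeff_def indices by (rule prod.union_disjoint) auto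
  also have "(\<Prod>k\<in>?below. 1 / of_int \<bar>d ! i - d ! k\<bar>)
      = (\<Prod>m\<in>{1..i}. 1 / of_int (d ! i - d ! (i - m)))"
  proof -
    have "\<bar>d ! i - d ! (i - m)\<bar> = d ! i - d ! (i - m)" if "m \<in> {1..i}" for m
      using sorted_wrt_nth_less[OF d, of "i - m" i] that i by auto
    then show ?thesis by (subst prod.reindex) (auto simp: inj_on_def intro!: prod.cong)
  qed
  also have "(\<Prod>k\<in>?above. 1 / of_int \<bar>d ! i - d ! k\<bar>)
      = (\<Prod>m\<in>{1..length d - 1 - i}. 1 / of_int (d ! (i + m) - d ! i))"
  proof -
    have "\<bar>d ! i - d ! (i + m)\<bar> = d ! (i + m) - d ! i" if "m \<in> {1..length d - 1 - i}" for m
    proof -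
      have "i + m < length d" using that i by auto
      then show ?thesis using sorted_wrt_nth_less[OF d, of i "i + m"] that by auto
    qed
    then show ?thesis by (subst prod.reindex) (auto simp: inj_on_def intro!: prod.cong)
  qed
  finally show ?thesis .
qed

lemma finite_dsupp_pure: "finite (dsupp (pure d))"
proof (rule finite_subset)
  show "dsupp (pure d) \<subseteq> (\<lambda>k. (k, d ! k)) ` {..<length d}"
    by (auto simp: dsupp_def pure_eq_pure_coeff split: if_splits)
qed simp

lemma dprod_eq_sum_left:
  assumes "finite (dsupp b)"
  shows "dprod b b' i j =
    (\<Sum>p\<in>{p \<in> dsupp b. fst p \<le> i}. b (fst p) (snd p) * b' (i - fst p) (j - snd p))"
proof -
  define E where "E = {p \<in> dsupp b. fst p \<le> i \<and> (i - fst p, j - snd p) \<in> dsupp b'}"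
  have "{(p, q). p \<in> dsupp b \<and> q \<in> dsupp b' \<and> fst p + fst q = i \<and> snd p + snd q = j}
      = (\<lambda>p. (p, (i - fst p, j - snd p))) ` E"
    unfolding E_def by (auto simp: image_iff)
  then have "dprod b b' i j = (\<Sum>p\<in>E. b (fst p) (snd p) * b' (i - fst p) (j - snd p))"
    unfolding dprod_def by (simp add: sum.reindex inj_on_def)
  also have "\<dots> = (\<Sum>p\<in>{p \<in> dsupp b. fst p \<le> i}. b (fst p) (snd p) * b' (i - fst p) (j - snd p))"
    by (rule sum.mono_neutral_left) (use assms in \<open>auto simp: E_def dsupp_def\<close>)
  finally show ?thesis .
qed

lemma dprod_dunit_right:
  assumes "finite (dsupp b)"
  shows "dprod b dunit = b"
proof (intro ext)
  fix i j
  have "dprod b dunit i j = (\<Sum>p\<in>{p \<in> dsupp b. fst p \<le> i}. if p = (i, j) then b i j else 0)"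
    unfolding dprod_eq_sum_left[OF assms] by (intro sum.cong) (auto simp: dunit_def)
  also have "\<dots> = b i j"
    using assms by (simp add: dsupp_def)
  finally show "dprod b dunit i j = b i j" .
qed

lemma dprod_pure_left:
  "dprod (pure d) b i j = (\<Sum>k | k < length d \<and> k \<le> i. pure_coeff d k * b (i - k) (j - d ! k))"
proof -
  let ?S = "(\<lambda>k. (k, d ! k)) ` {..<length d}"
  have "dprod (pure d) b i j
      = (\<Sum>p\<in>{p \<in> ?S. fst p \<le> i}. pure d (fst p) (snd p) * b (i - fst p) (j - snd p))"
    unfolding dprod_eq_sum_left[OF finite_dsupp_pure]
    by (rule sum.mono_neutral_left) (auto simp: dsupp_def pure_eq_pure_coeff split: if_splits)
  also have "{p \<in> ?S. fst p \<le> i} = (\<lambda>k. (k, d ! k)) ` {k. k < length d \<and> k \<le> i}"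
    by auto
  also have "(\<Sum>p\<in>\<dots>. pure d (fst p) (snd p) * b (i - fst p) (j - snd p))
      = (\<Sum>k | k < length d \<and> k \<le> i. pure_coeff d k * b (i - k) (j - d ! k))"
    by (simp add: sum.reindex inj_on_def pure_eq_pure_coeff)
  finally show ?thesis .
qed

definition index_tuples :: "int list list \<Rightarrow> nat \<Rightarrow> int \<Rightarrow> nat list set" where
  "index_tuples ds i j = {a. length a = length ds \<and> (\<forall>t<length ds. a ! t < length (ds ! t))
     \<and> sum_list a = i \<and> (\<Sum>t<length ds. ds ! t ! (a ! t)) = j}"

lemma finite_index_tuples: "finite (index_tuples ds i j)"
proof (rule finite_subset)
  show "index_tuples ds i j \<subseteq> {a. set a \<subseteq> {..i} \<and> length a = length ds}"
    by (auto simp: index_tuples_def intro: member_le_sum_list)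
qed (simp add: finite_lists_length_eq)

lemma index_tuples_Cons:
  "index_tuples (d # ds) i j = (\<lambda>(k, a). k # a) `
     (SIGMA k:{k. k < length d \<and> k \<le> i}. index_tuples ds (i - k) (j - d ! k))"
proof (intro equalityI subsetI)
  fix a assume a: "a \<in> index_tuples (d # ds) i j"
  then obtain k a' where ka: "a = k # a'" by (cases a) (auto simp: index_tuples_def)
  have "(\<Sum>t<length (d # ds). (d # ds) ! t ! (a ! t)) = d ! k + (\<Sum>t<length ds. ds ! t ! (a' ! t))"
    unfolding ka length_Cons sum.lessThan_Suc_shift by simp
  then have "k < length d" "k \<le> i" "a' \<in> index_tuples ds (i - k) (j - d ! k)"
    using a ka by (auto simp: index_tuples_def)
  then show "a \<in> (\<lambda>(k, a). k # a) `
      (SIGMA k:{k. k < length d \<and> k \<le> i}. index_tuples ds (i - k) (j - d ! k))"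
    using ka by blast
next
  fix a assume "a \<in> (\<lambda>(k, a). k # a) `
      (SIGMA k:{k. k < length d \<and> k \<le> i}. index_tuples ds (i - k) (j - d ! k))"
  then obtain k a' where ka: "a = k # a'" "k < length d" "k \<le> i"
    "a' \<in> index_tuples ds (i - k) (j - d ! k)" by auto
  have "(\<Sum>t<length (d # ds). (d # ds) ! t ! (a ! t)) = d ! k + (\<Sum>t<length ds. ds ! t ! (a' ! t))"
    unfolding ka length_Cons sum.lessThan_Suc_shift by simp
  then show "a \<in> index_tuples (d # ds) i j"
    using ka unfolding index_tuples_def by (auto simp: nth_Cons split: nat.splits)
qed

lemma dprod_list_pure:
  "dprod_list (map pure ds) i j =
    (\<Sum>a\<in>index_tuples ds i j. \<Prod>t<length ds. pure_coeff (ds ! t) (a ! t))"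
proof (induction ds arbitrary: i j)
  case Nil
  have "index_tuples [] i j = (if i = 0 \<and> j = 0 then {[]} else {})"
    by (auto simp: index_tuples_def)
  then show ?case by (simp add: dprod_list_def dunit_def)
next
  case (Cons d ds)
  have "dprod_list (map pure (d # ds)) i j = dprod (pure d) (dprod_list (map pure ds)) i j"
    by (simp add: dprod_list_def)
  also have "\<dots> = (\<Sum>k | k < length d \<and> k \<le> i. \<Sum>a\<in>index_tuples ds (i - k) (j - d ! k).
           pure_coeff d k * (\<Prod>t<length ds. pure_coeff (ds ! t) (a ! t)))"
    by (simp add: dprod_pure_left Cons.IH sum_distrib_left)
  also have "\<dots> = (\<Sum>(k, a)\<in>(SIGMA k:{k. k < length d \<and> k \<le> i}. index_tuples ds (i - k) (j - d ! k)).
           pure_coeff d k * (\<Prod>t<length ds. pure_coeff (ds ! t) (a ! t)))"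
    by (rule sum.Sigma) (auto simp: finite_index_tuples)
  also have "\<dots> = (\<Sum>a\<in>index_tuples (d # ds) i j.
      \<Prod>t<length (d # ds). pure_coeff ((d # ds) ! t) (a ! t))"
    unfolding index_tuples_Cons
    by (subst sum.reindex)
      (auto simp: inj_on_def prod.lessThan_Suc_shift simp del: prod.lessThan_Suc
        intro!: sum.cong)
  finally show ?case .
qed

lemma length_Delta [simp]: "length (Delta d) = length d - 1"
  by (simp add: Delta_def)

lemma sum_list_take_Delta: "k < length d \<Longrightarrow> sum_list (take k (Delta d)) = d ! k - d ! 0"
proof (induction k)
  case (Suc k)
  then have "k < length d - 1" by simp
  then have "take (Suc k) (Delta d) = take k (Delta d) @ [d ! Suc k - d ! k]"
    by (simp add: take_Suc_conv_app_nth Delta_def)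
  then show ?case using Suc by simp
qed simp

lemma length_interleave [simp]: "length (interleave w As) = length w"
  by (induction w arbitrary: As) auto

lemma take_interleave: "take k (interleave w As) = interleave (take k w) As"
  by (induction w arbitrary: k As) (auto simp: take_Cons split: nat.splits)

lemma sum_list_interleave:
  fixes As :: "'a::comm_monoid_add list list"
  assumes "set w \<subseteq> {..<length As}" and "\<forall>t<length As. count_list w t \<le> length (As ! t)"
  shows "sum_list (interleave w As) = (\<Sum>t<length As. sum_list (take (count_list w t) (As ! t)))"
  using assms
proof (induction w arbitrary: As)
  case (Cons x w)
  define As' where "As' = As[x := tl (As ! x)]"
  have x: "x < length As" using Cons.prems by auto
  then obtain y ys where y: "As ! x = y # ys"
    using Cons.prems(2) by (cases "As ! x") auto
  have "\<forall>t<length As'. count_list w t \<le> length (As' ! t)"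
    using Cons.prems(2) x y by (auto simp: As'_def nth_list_update)
  then have IH: "sum_list (interleave w As') =
      (\<Sum>t<length As. sum_list (take (count_list w t) (As' ! t)))"
    using Cons.IH[of As'] Cons.prems(1) by (simp add: As'_def)
  have "(\<Sum>t<length As. sum_list (take (count_list (x # w) t) (As ! t)))
      = y + (\<Sum>t<length As. sum_list (take (count_list w t) (As' ! t)))"
  proof -
    have "(\<Sum>t<length As. sum_list (take (count_list (x # w) t) (As ! t)))
        = (\<Sum>t<length As. (if t = x then y else 0) + sum_list (take (count_list w t) (As' ! t)))"
      using y by (intro sum.cong) (auto simp: As'_def)
    then show ?thesis using x by (simp add: sum.distrib)
  qed
  then show ?case using IH y by (simp add: As'_def)
qed simp

definition shuffle_degree :: "int list list \<Rightarrow> nat list \<Rightarrow> nat \<Rightarrow> int" where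
  "shuffle_degree ds w k = (\<Sum>t<length ds. ds ! t ! count_list (take k w) t)"

definition shuffle_seq :: "int list list \<Rightarrow> nat list \<Rightarrow> int list" where
  "shuffle_seq ds w = map (shuffle_degree ds w) [0..<length w + 1]"

lemma shuffle_words_map_Delta:
  "shuffle_words (map Delta ds) = words_with_counts (length ds) (\<lambda>t. length (ds ! t) - 1)"
  by (auto simp: shuffle_words_def words_with_counts_def)

lemma count_list_take_le: "count_list (take k w) x \<le> count_list w x"
  by (metis append_take_drop_id count_list_append le_add1)

lemma count_list_take_less_length:
  assumes "\<forall>d\<in>set ds. degree_seq d"
    and "w \<in> words_with_counts (length ds) (\<lambda>t. length (ds ! t) - 1)" and "t < length ds"
  shows "count_list (take k w) t < length (ds ! t)"
proof -
  have "ds ! t \<noteq> []" using assms(1,3) by (simp add: degree_seq_def)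
  moreover have "count_list (take k w) t \<le> length (ds ! t) - 1"
    using count_list_take_le[of k w t] assms(2,3) by (simp add: words_with_counts_def)
  ultimately show ?thesis by (cases "ds ! t") auto
qed

lemma Sigma_seq_interleave_Delta:
  assumes ds: "\<forall>d\<in>set ds. degree_seq d"
    and w: "w \<in> words_with_counts (length ds) (\<lambda>t. length (ds ! t) - 1)"
  shows "Sigma_seq (interleave w (map Delta ds)) (sum_list (map hd ds)) = shuffle_seq ds w"
proof -
  have "sum_list (map hd ds) + sum_list (take k (interleave w (map Delta ds)))
      = shuffle_degree ds w k" for k
  proof -
    have "set (take k w) \<subseteq> {..<length ds}"
      using w by (auto simp: words_with_counts_def dest: in_set_takeD)
    moreover have "\<forall>t<length ds. count_list (take k w) t \<le> length (ds ! t) - 1"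
    proof (intro allI impI)
      fix t assume "t < length ds"
      from count_list_take_less_length[OF ds w this, of k]
      show "count_list (take k w) t \<le> length (ds ! t) - 1" by linarith
    qed
    ultimately have "sum_list (take k (interleave w (map Delta ds)))
        = (\<Sum>t<length ds. ds ! t ! count_list (take k w) t - ds ! t ! 0)"
      unfolding take_interleave
      by (subst sum_list_interleave) (auto intro!: sum.cong sum_list_take_Delta
          count_list_take_less_length[OF ds w])
    moreover have "sum_list (map hd ds) = (\<Sum>t<length ds. ds ! t ! 0)"
      using ds by (simp add: sum_list_sum_nth atLeast0LessThan hd_conv_nth degree_seq_def)
    ultimately show ?thesis by (simp add: shuffle_degree_def sum_subtractf)
  qed
  then show ?thesis
    by (simp add: Sigma_seq_def shuffle_seq_def del: upt_Suc)
qed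

lemma shuffle_degree_less_Suc:
  assumes ds: "\<forall>d\<in>set ds. degree_seq d"
    and w: "w \<in> words_with_counts (length ds) (\<lambda>t. length (ds ! t) - 1)" and k: "k < length w"
  shows "shuffle_degree ds w k < shuffle_degree ds w (Suc k)"
proof -
  define x where "x = w ! k"
  define n where "n = count_list (take k w) x"
  have x: "x < length ds" using w nth_mem[OF k] by (auto simp: x_def words_with_counts_def)
  have take_Suc: "take (Suc k) w = take k w @ [x]"
    using k by (simp add: take_Suc_conv_app_nth x_def)
  have "shuffle_degree ds w (Suc k)
      = (\<Sum>t<length ds. ds ! t ! count_list (take k w) t
          + (if t = x then ds ! x ! Suc n - ds ! x ! n else 0))"
    unfolding shuffle_degree_def take_Suc by (intro sum.cong) (auto simp: n_def)
  also have "\<dots> = shuffle_degree ds w k + (ds ! x ! Suc n - ds ! x ! n)"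
    using x by (simp add: sum.distrib shuffle_degree_def)
  finally have "shuffle_degree ds w (Suc k)
      = shuffle_degree ds w k + (ds ! x ! Suc n - ds ! x ! n)" .
  moreover have "Suc n < length (ds ! x)"
    using count_list_take_less_length[OF ds w x, of "Suc k"] by (simp add: take_Suc n_def)
  then have "ds ! x ! n < ds ! x ! Suc n"
    using ds x by (intro sorted_wrt_nth_less[where P = "(<)"]) (auto simp: degree_seq_def)
  ultimately show ?thesis by simp
qed

lemma sorted_shuffle_seq:
  assumes "\<forall>d\<in>set ds. degree_seq d"
    and "w \<in> words_with_counts (length ds) (\<lambda>t. length (ds ! t) - 1)"
  shows "sorted_wrt (<) (shuffle_seq ds w)"
  using shuffle_degree_less_Suc[OF assms]
  by (simp add: sorted_wrt_iff_nth_Suc_transp shuffle_seq_def nth_append del: upt_Suc)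

lemma nth_shuffle_seq: "k \<le> length w \<Longrightarrow> shuffle_seq ds w ! k = shuffle_degree ds w k"
  by (simp add: shuffle_seq_def nth_append del: upt_Suc)

lemma length_shuffle_seq [simp]: "length (shuffle_seq ds w) = length w + 1"
  by (simp add: shuffle_seq_def)

lemma shuffle_degree_append:
  "shuffle_degree ds (u @ v) (length u + m)
    = (\<Sum>t<length ds. ds ! t ! (count_list u t + count_list (take m v) t))"
  by (simp add: shuffle_degree_def)

lemma shuffle_degree_append_rev:
  assumes "m \<le> length u"
  shows "shuffle_degree ds (u @ v) (length u - m)
    = (\<Sum>t<length ds. ds ! t ! (count_list u t - count_list (take m (rev u)) t))"
proof -
  have "count_list (take (length u - m) u) t = count_list u t - count_list (take m (rev u)) t" for t
  proof -
    have "count_list u t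
        = count_list (take (length u - m) u) t + count_list (drop (length u - m) u) t"
      by (metis append_take_drop_id count_list_append)
    then show ?thesis by (simp add: take_rev)
  qed
  then show ?thesis using assms by (simp add: shuffle_degree_def)
qed

lemma pure_coeff_shuffle_seq_append:
  assumes ds: "\<forall>d\<in>set ds. degree_seq d"
    and uv: "u @ v \<in> words_with_counts (length ds) (\<lambda>t. length (ds ! t) - 1)"
    and u: "u \<in> words_with_counts (length ds) (\<lambda>t. a ! t)"
  shows "pure_coeff (shuffle_seq ds (u @ v)) (length u)
    = word_weight (length ds) (\<lambda>t m. of_int (ds ! t ! (a ! t) - ds ! t ! (a ! t - m))) (rev u)
    * word_weight (length ds) (\<lambda>t m. of_int (ds ! t ! (a ! t + m) - ds ! t ! (a ! t))) v"
proof -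
  let ?V = "shuffle_degree ds (u @ v)"
  have count_u: "count_list u t = a ! t" if "t < length ds" for t
    using u that by (simp add: words_with_counts_def)
  have "pure_coeff (shuffle_seq ds (u @ v)) (length u)
      = (\<Prod>m\<in>{1..length u}. 1 / of_int (?V (length u) - ?V (length u - m)))
      * (\<Prod>m\<in>{1..length v}. 1 / of_int (?V (length u + m) - ?V (length u)))"
    using pure_coeff_split[OF sorted_shuffle_seq[OF ds uv], of "length u"]
    by (simp add: nth_shuffle_seq)
  also have "(\<Prod>m\<in>{1..length u}. 1 / of_int (?V (length u) - ?V (length u - m)))
      = word_weight (length ds) (\<lambda>t m. of_int (ds ! t ! (a ! t) - ds ! t ! (a ! t - m))) (rev u)"
    unfolding word_weight_def
    using shuffle_degree_append[of ds u v 0] shuffle_degree_append_rev[of _ u ds v] count_u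
    by (intro prod.cong) (simp_all add: sum_subtractf)
  also have "(\<Prod>m\<in>{1..length v}. 1 / of_int (?V (length u + m) - ?V (length u)))
      = word_weight (length ds) (\<lambda>t m. of_int (ds ! t ! (a ! t + m) - ds ! t ! (a ! t))) v"
    unfolding word_weight_def
    using shuffle_degree_append[of ds u v] shuffle_degree_append[of ds u v 0] count_u
    by (intro prod.cong) (simp_all add: sum_subtractf)
  finally show ?thesis .
qed

definition prefix_counts :: "nat \<Rightarrow> nat list \<Rightarrow> nat \<Rightarrow> nat list" where
  "prefix_counts r w i = map (\<lambda>t. count_list (take i w) t) [0..<r]"

lemma sum_pure_coeff_shuffle_seq_prefix_counts:
  assumes ds: "\<forall>d\<in>set ds. degree_seq d" and a: "a \<in> index_tuples ds i j"
  shows "(\<Sum>w | w \<in> words_with_counts (length ds) (\<lambda>t. length (ds ! t) - 1)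
             \<and> prefix_counts (length ds) w i = a. pure_coeff (shuffle_seq ds w) i)
    = (\<Prod>t<length ds. pure_coeff (ds ! t) (a ! t))"
proof -
  define r where "r = length ds"
  define dist_left :: "nat \<Rightarrow> nat \<Rightarrow> rat"
    where "dist_left = (\<lambda>t m. of_int (ds ! t ! (a ! t) - ds ! t ! (a ! t - m)))"
  define dist_right :: "nat \<Rightarrow> nat \<Rightarrow> rat"
    where "dist_right = (\<lambda>t m. of_int (ds ! t ! (a ! t + m) - ds ! t ! (a ! t)))"
  let ?c = "\<lambda>t. length (ds ! t) - 1"
  let ?U = "words_with_counts r (\<lambda>t. a ! t)" and ?V = "words_with_counts r (\<lambda>t. ?c t - a ! t)"
  have len_a: "length a = r" and a_less: "\<forall>t<r. a ! t < length (ds ! t)"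
    and sum_a: "(\<Sum>t<r. a ! t) = i"
    using a by (auto simp: index_tuples_def r_def sum_list_sum_nth atLeast0LessThan)
  have sorted: "sorted_wrt (<) (ds ! t)" if "t < r" for t
    using ds that by (simp add: degree_seq_def r_def)
  have bij: "bij_betw (\<lambda>(u, v). u @ v) (?U \<times> ?V)
      {w \<in> words_with_counts r ?c. prefix_counts r w i = a}"
  proof -
    have "prefix_counts r w i = a \<longleftrightarrow> (\<forall>t<r. count_list (take i w) t = a ! t)" for w
      unfolding prefix_counts_def using len_a by (auto simp: list_eq_iff_nth_eq)
    moreover have "\<forall>t<r. a ! t \<le> ?c t"
    proof (intro allI impI)
      fix t assume "t < r"
      from a_less[rule_format, OF this] show "a ! t \<le> ?c t" by linarith
    qed
    ultimately show ?thesis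
      using words_with_counts_append_split[of r "\<lambda>t. a ! t" ?c] sum_a by simp
  qed
  have "(\<Sum>w | w \<in> words_with_counts r ?c \<and> prefix_counts r w i = a. pure_coeff (shuffle_seq ds w) i)
      = (\<Sum>(u, v)\<in>?U \<times> ?V. word_weight r dist_left (rev u) * word_weight r dist_right v)"
  proof (subst sum.reindex_bij_betw[OF bij, symmetric], intro sum.cong refl, clarify)
    fix u v assume u: "u \<in> ?U" and v: "v \<in> ?V"
    have "u @ v \<in> words_with_counts r ?c" using bij u v by (auto dest: bij_betw_apply)
    moreover have "length u = i" using length_words_with_counts[OF u] sum_a by simp
    ultimately show "pure_coeff (shuffle_seq ds (u @ v)) i
        = word_weight r dist_left (rev u) * word_weight r dist_right v"
      using pure_coeff_shuffle_seq_append[OF ds, of u v a] u by (simp add: r_def dist_left_def dist_right_def)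
  qed
  also have "\<dots> = (\<Sum>u\<in>?U. word_weight r dist_left u) * (\<Sum>v\<in>?V. word_weight r dist_right v)"
  proof -
    have "(\<Sum>(u, v)\<in>?U \<times> ?V. word_weight r dist_left (rev u) * word_weight r dist_right v)
        = (\<Sum>u\<in>?U. word_weight r dist_left (rev u)) * (\<Sum>v\<in>?V. word_weight r dist_right v)"
      by (simp add: sum_product sum.cartesian_product)
    also have "(\<Sum>u\<in>?U. word_weight r dist_left (rev u)) = (\<Sum>u\<in>?U. word_weight r dist_left u)"
      by (rule sum.reindex_bij_witness[of _ rev rev]) (auto intro: rev_words_with_counts)
    finally show ?thesis .
  qed
  also have "\<dots> = (\<Prod>t<r. \<Prod>m\<in>{1..a ! t}. 1 / dist_left t m)
      * (\<Prod>t<r. \<Prod>m\<in>{1..?c t - a ! t}. 1 / dist_right t m)"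
  proof (intro arg_cong2[where f = "(*)"] sum_word_weight_words_with_counts)
    show "\<forall>t<r. \<forall>m\<in>{1..a ! t}. 0 < dist_left t m"
      using sorted a_less by (auto simp: dist_left_def intro: sorted_wrt_nth_less)
    show "\<forall>t<r. \<forall>m\<in>{1..?c t - a ! t}. 0 < dist_right t m"
    proof (intro allI impI ballI)
      fix t m assume "t < r" and "m \<in> {1..?c t - a ! t}"
      then have "a ! t < a ! t + m" "a ! t + m < length (ds ! t)" by auto
      then show "0 < dist_right t m"
        using sorted[OF \<open>t < r\<close>] by (simp add: dist_right_def sorted_wrt_nth_less)
    qed
  qed (simp_all add: dist_left_def dist_right_def)
  also have "\<dots> = (\<Prod>t<r. pure_coeff (ds ! t) (a ! t))"
    using pure_coeff_split[OF sorted] a_less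
    by (simp add: dist_left_def dist_right_def flip: prod.distrib)
  finally show ?thesis by (simp add: r_def)
qed

lemma prefix_counts_in_index_tuples_iff:
  assumes ds: "\<forall>d\<in>set ds. degree_seq d"
    and w: "w \<in> words_with_counts (length ds) (\<lambda>t. length (ds ! t) - 1)"
  shows "prefix_counts (length ds) w i \<in> index_tuples ds i j
    \<longleftrightarrow> i \<le> length w \<and> shuffle_degree ds w i = j"
proof -
  have "sum_list (prefix_counts (length ds) w i) = (\<Sum>t<length ds. count_list (take i w) t)"
    by (simp add: prefix_counts_def sum_list_sum_nth atLeast0LessThan)
  also have "\<dots> = min (length w) i"
    using w by (subst sum_count_set) (auto simp: words_with_counts_def dest: in_set_takeD)
  finally show ?thesis
    using count_list_take_less_length[OF ds w]
    by (auto simp: index_tuples_def prefix_counts_def shuffle_degree_def)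
qed

lemma sum_shuffle_words_pure:
  assumes ds: "\<forall>d\<in>set ds. degree_seq d"
  shows "(\<Sum>w\<in>shuffle_words (map Delta ds).
            pure (Sigma_seq (interleave w (map Delta ds)) (sum_list (map hd ds))) i j)
    = (\<Sum>a\<in>index_tuples ds i j. \<Prod>t<length ds. pure_coeff (ds ! t) (a ! t))"
proof -
  define W where "W = words_with_counts (length ds) (\<lambda>t. length (ds ! t) - 1)"
  let ?p = "\<lambda>w. prefix_counts (length ds) w i"
  have "(\<Sum>w\<in>shuffle_words (map Delta ds).
            pure (Sigma_seq (interleave w (map Delta ds)) (sum_list (map hd ds))) i j)
      = (\<Sum>w\<in>W. if ?p w \<in> index_tuples ds i j then pure_coeff (shuffle_seq ds w) i else 0)"
    unfolding shuffle_words_map_Delta W_def[symmetric]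
  proof (intro sum.cong refl)
    fix w assume "w \<in> W"
    then show "pure (Sigma_seq (interleave w (map Delta ds)) (sum_list (map hd ds))) i j
        = (if ?p w \<in> index_tuples ds i j then pure_coeff (shuffle_seq ds w) i else 0)"
      using Sigma_seq_interleave_Delta[OF ds] prefix_counts_in_index_tuples_iff[OF ds]
      by (auto simp: W_def pure_eq_pure_coeff nth_shuffle_seq)
  qed
  also have "\<dots> = (\<Sum>w | w \<in> W \<and> ?p w \<in> index_tuples ds i j. pure_coeff (shuffle_seq ds w) i)"
    by (simp add: sum.inter_filter W_def finite_words_with_counts)
  also have "\<dots> = (\<Sum>a\<in>index_tuples ds i j.
      \<Sum>w\<in>{w \<in> {w. w \<in> W \<and> ?p w \<in> index_tuples ds i j}. ?p w = a}. pure_coeff (shuffle_seq ds w) i)"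
    by (rule sum.group[symmetric]) (auto simp: W_def finite_words_with_counts finite_index_tuples)
  also have "\<dots> = (\<Sum>a\<in>index_tuples ds i j. \<Sum>w | w \<in> W \<and> ?p w = a. pure_coeff (shuffle_seq ds w) i)"
    by (intro sum.cong) auto
  also have "\<dots> = (\<Sum>a\<in>index_tuples ds i j. \<Prod>t<length ds. pure_coeff (ds ! t) (a ! t))"
    using sum_pure_coeff_shuffle_seq_prefix_counts[OF ds] by (simp add: W_def)
  finally show ?thesis .
qed

lemma dprod_list_pure_eq_sum_shuffle_words:
  assumes "\<forall>d\<in>set ds. degree_seq d"
  shows "dprod_list (map pure ds) i j =
    (\<Sum>w\<in>shuffle_words (map Delta ds).
       pure (Sigma_seq (interleave w (map Delta ds)) (sum_list (map hd ds))) i j)"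
  using dprod_list_pure sum_shuffle_words_pure[OF assms] by simp

theorem theorem5p2:
  fixes c d :: "int list" and ds :: "int list list"
  assumes "degree_seq c" and "degree_seq d"
    and "ds \<noteq> []" and "\<forall>x \<in> set ds. degree_seq x"
  shows "(\<forall>i j. dprod (pure c) (pure d) i j =
            (\<Sum>w \<in> shuffle_words [Delta c, Delta d].
               pure (Sigma_seq (interleave w [Delta c, Delta d]) (hd c + hd d)) i j))
       \<and> (\<forall>i j. dprod_list (map pure ds) i j =
            (\<Sum>w \<in> shuffle_words (map Delta ds).
               pure (Sigma_seq (interleave w (map Delta ds)) (sum_list (map hd ds))) i j))"
proof
  have "dprod (pure c) (pure d) = dprod_list (map pure [c, d])"
    by (simp add: dprod_list_def dprod_dunit_right finite_dsupp_pure)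
  then show "\<forall>i j. dprod (pure c) (pure d) i j =
      (\<Sum>w \<in> shuffle_words [Delta c, Delta d].
         pure (Sigma_seq (interleave w [Delta c, Delta d]) (hd c + hd d)) i j)"
    using dprod_list_pure_eq_sum_shuffle_words[of "[c, d]"] assms(1,2) by simp
  show "\<forall>i j. dprod_list (map pure ds) i j =
      (\<Sum>w \<in> shuffle_words (map Delta ds).
         pure (Sigma_seq (interleave w (map Delta ds)) (sum_list (map hd ds))) i j)"
    using dprod_list_pure_eq_sum_shuffle_words assms(4) by blast
qed

end
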